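(* Let $A \in \mathbb{R}^{m \times n}$ be such that the map $\psi_A : \mathbb{R}^n \to \{-1,0,1\}^m$, $\psi_A(\mathbf{x}) = \mathrm{sign}(A\mathbf{x})$, satisfies $\psi_A(\mathbf{x}_1) \neq \psi_A(\mathbf{x}_2)$ whenever $\|\mathbf{x}_1\|_0, \|\mathbf{x}_2\|_0 \le k$ and $\mathrm{supp}(\mathbf{x}_1) \neq \mathrm{supp}(\mathbf{x}_2)$. Then $m = \Omega(k^2 \log n / \log k)$.
   Context: For real $x$, $\mathrm{sign}(x) = x/|x|$ if $x \neq 0$ and $\mathrm{sign}(0) = 0$, applied coordinatewise to vectors. $\|\mathbf{x}\|_0$ denotes the number of nonzero coordinates of $\mathbf{x}$, and $\mathrm{supp}(\mathbf{x})$ the set of indices of nonzero coordinates. *)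

theory Defs
  imports Complex_Main
begin

text \<open>Vectors in R^n are functions nat => real vanishing outside {..<n};
  an m x n matrix is a function nat => nat => real (only entries i<m, j<n matter).\<close>

definition is_vec :: "nat \<Rightarrow> (nat \<Rightarrow> real) \<Rightarrow> bool" where
  "is_vec n x \<longleftrightarrow> (\<forall>j\<ge>n. x j = 0)"

definition supp :: "(nat \<Rightarrow> real) \<Rightarrow> nat set" where
  "supp x = {j. x j \<noteq> 0}"

definition l0 :: "(nat \<Rightarrow> real) \<Rightarrow> nat" where
  "l0 x = card (supp x)"

text \<open>psi_A(x) = sign(A x), coordinatewise sign (Isabelle's sgn: sgn 0 = 0),
  as an element of {-1,0,1}^m (coordinates i >= m set to 0).\<close>
definition psi :: "nat \<Rightarrow> nat \<Rightarrow> (nat \<Rightarrow> nat \<Rightarrow> real) \<Rightarrow> (nat \<Rightarrow> real) \<Rightarrow> (nat \<Rightarrow> real)" where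
  "psi m n A x = (\<lambda>i. if i < m then sgn (\<Sum>j<n. A i j * x j) else 0)"

definition support_recovering :: "nat \<Rightarrow> nat \<Rightarrow> nat \<Rightarrow> (nat \<Rightarrow> nat \<Rightarrow> real) \<Rightarrow> bool" where
  "support_recovering m n k A \<longleftrightarrow>
     (\<forall>x1 x2. is_vec n x1 \<longrightarrow> is_vec n x2 \<longrightarrow> l0 x1 \<le> k \<longrightarrow> l0 x2 \<le> k \<longrightarrow>
        supp x1 \<noteq> supp x2 \<longrightarrow> psi m n A x1 \<noteq> psi m n A x2)"

end

theory Submission
  imports Defs
begin

text \<open>Let \<open>F j\<close> be the set of rows in which column \<open>j\<close> of \<open>A\<close> is nonzero. If \<open>F j\<^sub>0\<close> were
  covered by the \<open>F j\<close>, \<open>j \<in> S\<close>, with \<open>|S| < k\<close> and \<open>j\<^sub>0 \<notin> S\<close>, take \<open>x\<close> supported on \<open>S\<close> with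
  \<open>(A x)\<^sub>i \<noteq> 0\<close> in every row meeting \<open>S\<close>; after scaling \<open>x\<close> up, adding the unit vector \<open>e\<^sub>j\<^sub>0\<close>
  changes no sign of \<open>A x\<close> but changes the support. So the \<open>F j\<close> form a \<open>(k-1)\<close>-cover-free
  family of \<open>n\<close> subsets of an \<open>m\<close>-set. Such a family has at most \<open>r/2 + #{T \<subseteq> [m] : |T| \<le> t}\<close>
  members for \<open>t \<approx> 4m/r\<^sup>2\<close>: greedily discard sets with more than \<open>rt\<close> elements (the rest stays
  cover-free for \<open>r - 1\<close> on the shrunk ground set), and once all sets are that small, each contains
  a private subset of size at most \<open>t\<close>. Since \<open>#{T : |T| \<le> t} \<le> r^(2t) exp (m/r\<^sup>2)\<close>, this gives
  \<open>ln n = O((m/k\<^sup>2) ln k)\<close>.\<close>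

definition cover_free :: "nat \<Rightarrow> 'a set \<Rightarrow> ('a \<Rightarrow> 'b set) \<Rightarrow> bool" where
  "cover_free r J F \<longleftrightarrow>
     (\<forall>j\<in>J. \<forall>S. S \<subseteq> J - {j} \<longrightarrow> finite S \<longrightarrow> card S \<le> r \<longrightarrow> \<not> F j \<subseteq> \<Union>(F ` S))"

definition subsets_upto :: "'a set \<Rightarrow> nat \<Rightarrow> 'a set set" where
  "subsets_upto U t = {T. T \<subseteq> U \<and> card T \<le> t}"

lemma finite_subsets_upto [simp]: "finite U \<Longrightarrow> finite (subsets_upto U t)"
  unfolding subsets_upto_def by auto

lemma card_subsets_upto_pos: "finite U \<Longrightarrow> 0 < card (subsets_upto U t)"
  using card_gt_0_iff by (fastforce simp: subsets_upto_def)

lemma subsets_upto_mono: "V \<subseteq> U \<Longrightarrow> subsets_upto V t \<subseteq> subsets_upto U t"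
  unfolding subsets_upto_def by auto

subsection \<open>Cover-free families\<close>

lemma split_into_small_subsets:
  assumes "finite A" "card A \<le> r * t"
  shows "\<exists>P. finite P \<and> card P \<le> r \<and> (\<forall>B\<in>P. B \<subseteq> A \<and> card B \<le> t) \<and> \<Union>P = A"
  using assms
proof (induction r arbitrary: A)
  case 0
  then show ?case by (intro exI[of _ "{}"]) auto
next
  case (Suc r)
  show ?case
  proof (cases "card A \<le> t")
    case True
    then show ?thesis by (intro exI[of _ "{A}"]) simp
  next
    case False
    then obtain B where B: "B \<subseteq> A" "card B = t"
      using obtain_subset_with_card_n[of t A] by auto
    have "card (A - B) \<le> r * t"
      using Suc.prems B card_Diff_subset[of B A] finite_subset[of B A] by simp
    then obtain P where P: "finite P" "card P \<le> r" "\<forall>C\<in>P. C \<subseteq> A - B \<and> card C \<le> t"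
        "\<Union>P = A - B"
      using Suc.IH[of "A - B"] Suc.prems(1) by blast
    show ?thesis
      using P B by (intro exI[of _ "insert B P"]) (auto simp: card_insert_if)
  qed
qed

lemma cover_free_private_subset:
  assumes cf: "cover_free r J F" and j: "j \<in> J"
    and "finite (F j)" "card (F j) \<le> r * t"
  shows "\<exists>T\<subseteq>F j. card T \<le> t \<and> (\<forall>l\<in>J - {j}. \<not> T \<subseteq> F l)"
proof (rule ccontr)
  assume "\<not> ?thesis"
  then have covered: "\<exists>l\<in>J - {j}. B \<subseteq> F l" if "B \<subseteq> F j" "card B \<le> t" for B
    using that by auto
  obtain P where P: "finite P" "card P \<le> r" "\<forall>B\<in>P. B \<subseteq> F j \<and> card B \<le> t" "\<Union>P = F j"
    using split_into_small_subsets[OF assms(3,4)] by blast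
  have "\<forall>B\<in>P. \<exists>l. l \<in> J - {j} \<and> B \<subseteq> F l"
    using P(3) covered by (meson Bex_def)
  then obtain g where g: "\<forall>B\<in>P. g B \<in> J - {j} \<and> B \<subseteq> F (g B)"
    by (rule bchoice[elim_format]) blast
  have "card (g ` P) \<le> r"
    using P(2) card_image_le[OF P(1), of g] by linarith
  moreover have "F j \<subseteq> \<Union>(F ` g ` P)"
  proof
    fix x
    assume "x \<in> F j"
    then obtain B where "B \<in> P" "x \<in> B"
      using P(4) by blast
    then show "x \<in> \<Union>(F ` g ` P)"
      using g by blast
  qed
  moreover have "g ` P \<subseteq> J - {j}"
    using g by blast
  ultimately show False
    using cf[unfolded cover_free_def, rule_format, OF j, of "g ` P"] P(1) by blast
qed

lemma card_cover_free_le_subsets_upto: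
  assumes "finite J" "finite U" "cover_free r J F"
    and small: "\<forall>j\<in>J. F j \<subseteq> U \<and> card (F j) \<le> r * t"
  shows "card J \<le> card (subsets_upto U t)"
proof -
  have "\<forall>j\<in>J. \<exists>T\<subseteq>F j. card T \<le> t \<and> (\<forall>l\<in>J - {j}. \<not> T \<subseteq> F l)"
    using cover_free_private_subset[OF assms(3)] small assms(2) finite_subset by meson
  then obtain T where T: "\<forall>j\<in>J. T j \<subseteq> F j \<and> card (T j) \<le> t \<and> (\<forall>l\<in>J - {j}. \<not> T j \<subseteq> F l)"
    by (rule bchoice[elim_format]) blast
  have "inj_on T J"
    by (rule inj_onI) (use T in blast)
  moreover have "T ` J \<subseteq> subsets_upto U t"
    using T small unfolding subsets_upto_def by blast
  ultimately show ?thesis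
    using card_inj_on_le assms(2) by (metis finite_subsets_upto)
qed

lemma cover_free_remove:
  assumes "cover_free r J F" "j\<^sub>0 \<in> J" "1 \<le> r"
  shows "cover_free (r - 1) (J - {j\<^sub>0}) (\<lambda>j. F j - F j\<^sub>0)"
  unfolding cover_free_def
proof (intro ballI allI impI notI)
  fix j S
  assume j: "j \<in> J - {j\<^sub>0}" and S: "S \<subseteq> J - {j\<^sub>0} - {j}" "finite S" "card S \<le> r - 1"
    and "F j - F j\<^sub>0 \<subseteq> \<Union>((\<lambda>j. F j - F j\<^sub>0) ` S)"
  then have "F j \<subseteq> \<Union>(F ` insert j\<^sub>0 S)"
    by blast
  moreover have "card (insert j\<^sub>0 S) \<le> r"
    using S(2,3) assms(3) by (auto simp: card_insert_if)
  moreover have "insert j\<^sub>0 S \<subseteq> J - {j}"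
    using assms(2) j S(1) by blast
  ultimately show False
    using assms(1) j S(2) unfolding cover_free_def by blast
qed

text \<open>Removing a set \<open>F j\<^sub>0\<close> with more than \<open>rt\<close> elements from the ground set \<open>U\<close> lowers the
  budget \<open>(q+1)(r-q)t\<close> for \<open>|U|\<close> to \<open>q(r-q)t\<close>, which is the budget for \<open>q-1\<close> and \<open>r-1\<close>.\<close>

lemma card_cover_free_le:
  assumes "q < r" "finite J" "finite U" "cover_free r J F" "\<forall>j\<in>J. F j \<subseteq> U"
    and "card U \<le> (q + 1) * (r - q) * t"
  shows "card J \<le> q + card (subsets_upto U t)"
  using assms
proof (induction q arbitrary: r J F U)
  case 0
  have "card (F j) \<le> r * t" if "j \<in> J" for j
  proof -
    have "card (F j) \<le> card U"
      using card_mono[OF "0.prems"(3)] "0.prems"(5) that by blast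
    then show ?thesis
      using "0.prems"(6) by simp
  qed
  then have "card J \<le> card (subsets_upto U t)"
    using card_cover_free_le_subsets_upto[OF "0.prems"(2-4)] "0.prems"(5) by blast
  then show ?case
    by simp
next
  case (Suc q)
  show ?case
  proof (cases "\<forall>j\<in>J. card (F j) \<le> r * t")
    case True
    then have "card J \<le> card (subsets_upto U t)"
      using card_cover_free_le_subsets_upto[OF Suc.prems(2-4)] Suc.prems(5) by blast
    then show ?thesis
      by simp
  next
    case False
    then obtain j\<^sub>0 where j\<^sub>0: "j\<^sub>0 \<in> J" "r * t < card (F j\<^sub>0)"
      by auto
    have Fj\<^sub>0: "F j\<^sub>0 \<subseteq> U"
      using Suc.prems(5) j\<^sub>0(1) by blast
    define s where "s = r - (q + 2)"
    have s: "r = q + 2 + s"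
      using Suc.prems(1) unfolding s_def by simp
    have "card (U - F j\<^sub>0) + card (F j\<^sub>0) = card U"
      using Fj\<^sub>0 Suc.prems(3) card_Diff_subset[of "F j\<^sub>0" U] card_mono[of U "F j\<^sub>0"]
        finite_subset[of "F j\<^sub>0" U] by simp
    moreover have "card U \<le> (q + 1) * (s + 1) * t + (s + 1) * t"
      using Suc.prems(6) unfolding s by (simp add: algebra_simps)
    moreover have "(s + 1) * t \<le> r * t"
      unfolding s by (intro mult_le_mono1) simp
    ultimately have "card (U - F j\<^sub>0) \<le> (q + 1) * (r - 1 - q) * t"
      using j\<^sub>0(2) unfolding s by simp
    moreover have "cover_free (r - 1) (J - {j\<^sub>0}) (\<lambda>j. F j - F j\<^sub>0)"
      using cover_free_remove[OF Suc.prems(4) j\<^sub>0(1)] s by simp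
    moreover have "\<forall>j\<in>J - {j\<^sub>0}. F j - F j\<^sub>0 \<subseteq> U - F j\<^sub>0"
      using Suc.prems(5) by blast
    moreover have "q < r - 1"
      using s by simp
    ultimately have "card (J - {j\<^sub>0}) \<le> q + card (subsets_upto (U - F j\<^sub>0) t)"
      using Suc.IH[of "r - 1" "J - {j\<^sub>0}" "U - F j\<^sub>0"] Suc.prems(2,3) by simp
    moreover have "card (subsets_upto (U - F j\<^sub>0) t) \<le> card (subsets_upto U t)"
      using Suc.prems(3) by (intro card_mono subsets_upto_mono) auto
    ultimately show ?thesis
      using card.remove[OF Suc.prems(2) j\<^sub>0(1)] by simp
  qed
qed

lemma card_cover_free_le_half:
  assumes "1 \<le> r" "finite J" "finite U" "cover_free r J F" "\<forall>j\<in>J. F j \<subseteq> U"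
  shows "card J \<le> r div 2 + card (subsets_upto U (4 * card U div r\<^sup>2 + 1))"
proof -
  let ?q = "r div 2" and ?t = "4 * card U div r\<^sup>2 + 1"
  have "r\<^sup>2 \<le> 4 * ((?q + 1) * (r - ?q))"
    by (cases "even r") (auto elim!: evenE oddE simp: power2_eq_square algebra_simps)
  then have "?t * r\<^sup>2 \<le> 4 * ((?q + 1) * (r - ?q) * ?t)"
    using mult_le_mono2 by (metis mult.assoc mult.commute)
  moreover have "4 * card U < ?t * r\<^sup>2"
    using div_mult_mod_eq[of "4 * card U" "r\<^sup>2"] mod_less_divisor[of "r\<^sup>2" "4 * card U"] assms(1)
    by (simp add: distrib_right del: mod_less_divisor)
  ultimately have "card U \<le> (?q + 1) * (r - ?q) * ?t"
    by linarith
  moreover have "?q < r"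
    using assms(1) by simp
  ultimately show ?thesis
    using card_cover_free_le[OF _ assms(2-5)] by blast
qed

lemma card_subsets_upto_le_exp:
  fixes x :: real
  assumes "finite U" "0 < x" "x \<le> 1"
  shows "real (card (subsets_upto U t)) * x ^ t \<le> exp (real (card U) * x)"
proof -
  have "real (card (subsets_upto U t)) * x ^ t = (\<Sum>T\<in>subsets_upto U t. x ^ t)"
    by simp
  also have "\<dots> \<le> (\<Sum>T\<in>subsets_upto U t. x ^ card T)"
    using assms(2,3) by (intro sum_mono power_decreasing) (auto simp: subsets_upto_def)
  also have "\<dots> \<le> (\<Sum>T\<in>Pow U. x ^ card T)"
    using assms(1,2) by (intro sum_mono2) (auto simp: subsets_upto_def)
  also have "\<dots> = (1 + x) ^ card U"
    using prod_add[OF assms(1), of "\<lambda>_. x" "\<lambda>_. 1"] by (simp add: add.commute)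
  also have "\<dots> \<le> exp x ^ card U"
    using assms(2) by (intro power_mono) simp_all
  also have "\<dots> = exp (real (card U) * x)"
    by (simp add: exp_of_nat_mult)
  finally show ?thesis .
qed

lemma ln_card_subsets_upto_le:
  fixes R :: real
  assumes "finite U" "1 \<le> R"
  shows "ln (card (subsets_upto U t)) \<le> card U / R\<^sup>2 + 2 * real t * ln R"
proof -
  let ?N = "real (card (subsets_upto U t))"
  have "?N * (1 / R\<^sup>2) ^ t \<le> exp (card U / R\<^sup>2)"
    using card_subsets_upto_le_exp[OF assms(1), of "1 / R\<^sup>2" t] assms(2)
    by (simp add: power_le_one)
  then have "?N \<le> exp (card U / R\<^sup>2) * R ^ (2 * t)"
    using assms(2) by (simp add: power_one_over divide_le_eq power_mult)
  then have "ln ?N \<le> ln (exp (card U / R\<^sup>2) * R ^ (2 * t))"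
    using card_subsets_upto_pos[OF assms(1)] by (intro ln_mono) auto
  also have "\<dots> = card U / R\<^sup>2 + 2 * real t * ln R"
    using assms(2) by (simp add: ln_mult ln_realpow)
  finally show ?thesis .
qed

lemma card_subsets_upto_one: "finite U \<Longrightarrow> card (subsets_upto U 1) \<le> card U + 1"
proof -
  assume U: "finite U"
  have "subsets_upto U 1 \<subseteq> insert {} ((\<lambda>i. {i}) ` U)"
    using finite_subset[OF _ U] by (auto simp: subsets_upto_def le_Suc_eq card_Suc_eq)
  then have "card (subsets_upto U 1) \<le> card (insert {} ((\<lambda>i. {i}) ` U))"
    using U by (intro card_mono) auto
  also have "\<dots> \<le> card U + 1"
    using U card_insert_le_m1[of "card U + 1"] card_image_le[of U "\<lambda>i. {i}"]
    by (simp add: card_insert_if)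
  finally show ?thesis .
qed

lemma card_cover_free_le_mult:
  assumes "1 \<le> r" "finite J" "finite U" "cover_free r J F" "\<forall>j\<in>J. F j \<subseteq> U"
  shows "card J \<le> (r + 1) * card (subsets_upto U (4 * card U div r\<^sup>2 + 1))"
proof -
  let ?N = "card (subsets_upto U (4 * card U div r\<^sup>2 + 1))"
  have "r * 1 \<le> r * ?N"
    using card_subsets_upto_pos[OF assms(3), of "4 * card U div r\<^sup>2 + 1"]
    by (intro mult_le_mono2) simp
  then have "r div 2 \<le> r * ?N"
    using div_le_dividend[of r 2] by linarith
  then show ?thesis
    using card_cover_free_le_half[OF assms] by simp
qed

lemma cover_free_sq_le_card:
  assumes "1 \<le> r" "finite J" "finite U" "cover_free r J F" "\<forall>j\<in>J. F j \<subseteq> U"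
    and "(r + 1)\<^sup>2 \<le> card J"
  shows "r\<^sup>2 \<le> 4 * card U"
proof (rule ccontr)
  assume "\<not> r\<^sup>2 \<le> 4 * card U"
  then have "4 * card U div r\<^sup>2 + 1 = 1"
    by simp
  then have "card J \<le> r div 2 + (card U + 1)"
    using card_cover_free_le_half[OF assms(1-5)] card_subsets_upto_one[OF assms(3)] by simp
  then have "r\<^sup>2 \<le> card U"
    using assms(6) by (simp add: power2_eq_square)
  with \<open>\<not> r\<^sup>2 \<le> 4 * card U\<close> show False
    by simp
qed

lemma ln_card_cover_free_le:
  assumes "1 \<le> r" "finite J" "finite U" "cover_free r J F" "\<forall>j\<in>J. F j \<subseteq> U"
    and "(r + 1)\<^sup>2 \<le> card J"
  defines "M \<equiv> card U / (real r)\<^sup>2"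
  shows "ln (card J) \<le> ln (real r + 1) + M + 16 * M * ln (real r + 1)"
proof -
  define t where "t = 4 * card U div r\<^sup>2 + 1"
  define N where "N = card (subsets_upto U t)"
  have N: "0 < N"
    using card_subsets_upto_pos[OF assms(3)] unfolding N_def by simp
  have "real (card J) \<le> (real r + 1) * N"
    using of_nat_mono[OF card_cover_free_le_mult[OF assms(1-5)], where 'a = real]
    unfolding N_def t_def by (simp add: algebra_simps)
  then have "ln (card J) \<le> ln ((real r + 1) * N)"
    using assms(6) by (intro ln_mono) (auto simp: power2_eq_square)
  also have "\<dots> = ln (real r + 1) + ln N"
    using N by (simp add: ln_mult)
  finally have "ln (card J) \<le> ln (real r + 1) + ln N" .
  moreover have "ln N \<le> M + 2 * real t * ln r"
    using ln_card_subsets_upto_le[OF assms(3)] assms(1) unfolding N_def M_def by simp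
  moreover have "real t \<le> 8 * M"
  proof -
    have "(real r)\<^sup>2 \<le> 4 * card U"
      using cover_free_sq_le_card[OF assms(1-6)] by (simp flip: of_nat_power)
    then have "1 / 4 \<le> M"
      using assms(1) unfolding M_def by (simp add: field_simps)
    moreover have "real t \<le> 4 * M + 1"
      using of_nat_div_le_of_nat[of "4 * card U" "r\<^sup>2"] unfolding t_def M_def by simp
    ultimately show ?thesis
      by simp
  qed
  then have "2 * real t * ln r \<le> 2 * (8 * M) * ln (real r + 1)"
    using assms(1) by (intro mult_mono) auto
  ultimately show ?thesis
    by simp
qed

lemma ln_2_ge_half: "1 / 2 \<le> ln (2 :: real)"
proof -
  have "exp 1 \<le> (4 :: real)"
    using exp_le by simp
  then have "1 \<le> ln (4 :: real)"
    by (simp add: ln_ge_iff)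
  moreover have "ln (4 :: real) = 2 * ln 2"
    using ln_realpow[of 2 2] by simp
  ultimately show ?thesis
    by simp
qed

lemma cover_free_card_bound:
  assumes "1 \<le> r" "finite J" "finite U" "cover_free r J F" "\<forall>j\<in>J. F j \<subseteq> U"
    and "(r + 1)\<^sup>2 \<le> card J"
  shows "(real r + 1)\<^sup>2 * ln (card J) \<le> 160 * card U * ln (real r + 1)"
proof -
  define K where "K = real r + 1"
  define M where "M = card U / (real r)\<^sup>2"
  have lnJ: "ln (card J) \<le> ln K + M + 16 * M * ln K"
    using ln_card_cover_free_le[OF assms] unfolding K_def M_def .
  have K: "2 \<le> K" "K \<le> 2 * real r"
    using assms(1) unfolding K_def by auto
  have "ln 2 \<le> ln K"
    using K by (intro ln_mono) auto
  then have lnK: "1 / 2 \<le> ln K"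
    using ln_2_ge_half by linarith
  have "K\<^sup>2 \<le> card J"
    using of_nat_mono[OF assms(6), where 'a = real] unfolding K_def by (simp add: add.commute)
  then have "ln (K\<^sup>2) \<le> ln (card J)"
    using K by (intro ln_mono) auto
  then have "2 * ln K \<le> ln (card J)"
    using K by (simp add: ln_realpow)
  moreover have M: "0 \<le> M"
    unfolding M_def by simp
  have "M \<le> 2 * M * ln K"
    using lnK M mult_left_mono[of "1 / 2" "ln K" "2 * M"] by simp
  ultimately have lnJ_bound: "ln (card J) \<le> 36 * M * ln K"
    using lnJ by linarith
  have "K\<^sup>2 \<le> 4 * (real r)\<^sup>2"
    using power_mono[OF K(2), of 2] K by (simp add: power_mult_distrib)
  then have KM: "K\<^sup>2 * M \<le> 4 * card U"
    using assms(1) M mult_right_mono[of "K\<^sup>2" "4 * (real r)\<^sup>2" M] unfolding M_def by simp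
  have "K\<^sup>2 * ln (card J) \<le> K\<^sup>2 * (36 * M * ln K)"
    using lnJ_bound by (rule mult_left_mono) simp
  also have "\<dots> = 36 * (K\<^sup>2 * M) * ln K"
    by (simp add: algebra_simps)
  also have "\<dots> \<le> 36 * (4 * card U) * ln K"
    using KM lnK by (intro mult_right_mono mult_left_mono) (auto simp: mult.commute)
  also have "\<dots> \<le> 160 * card U * ln K"
    using lnK by (intro mult_right_mono) auto
  finally show ?thesis
    unfolding K_def .
qed

subsection \<open>Support recovery forces a cover-free family\<close>

lemma sum_mult_add_unit:
  fixes f g :: "nat \<Rightarrow> real"
  assumes "a < n"
  shows "(\<Sum>j<n. f j * (g j + (if j = a then c else 0))) = (\<Sum>j<n. f j * g j) + f a * c"
proof -
  have "(\<Sum>j<n. f j * (g j + (if j = a then c else 0))) = (\<Sum>j<n. f j * g j + (if j = a then f a * c else 0))"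
    by (rule sum.cong) (auto simp: distrib_left)
  also have "\<dots> = (\<Sum>j<n. f j * g j) + f a * c"
    using assms by (simp add: sum.distrib sum.delta)
  finally show ?thesis .
qed

lemma exists_vec_supp_nonzero_rows:
  fixes A :: "nat \<Rightarrow> nat \<Rightarrow> real"
  assumes "finite S" "S \<subseteq> {..<n}"
  shows "\<exists>x. supp x = S \<and> (\<forall>i<m. (\<exists>s\<in>S. A i s \<noteq> 0) \<longrightarrow> (\<Sum>j<n. A i j * x j) \<noteq> 0)"
  using assms
proof (induction S rule: finite_induct)
  case empty
  show ?case
    by (intro exI[of _ "\<lambda>_. 0"]) (simp add: supp_def)
next
  case (insert a S)
  then obtain x where x: "supp x = S" "\<forall>i<m. (\<exists>s\<in>S. A i s \<noteq> 0) \<longrightarrow> (\<Sum>j<n. A i j * x j) \<noteq> 0"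
    by auto
  have a: "a < n" "x a = 0"
    using insert.prems insert.hyps(2) x(1) unfolding supp_def by auto
  text \<open>Adding \<open>c e\<^sub>a\<close> kills row \<open>i\<close> only for one value of \<open>c\<close>, and there are finitely many rows.\<close>
  define bad where "bad = insert 0 ((\<lambda>i. - (\<Sum>j<n. A i j * x j) / A i a) ` {..<m})"
  have "finite bad"
    unfolding bad_def by simp
  then obtain c :: real where c: "c \<notin> bad"
    using ex_new_if_finite[OF infinite_UNIV_char_0] by blast
  define x' where "x' = (\<lambda>j. x j + (if j = a then c else 0))"
  have row: "(\<Sum>j<n. A i j * x' j) = (\<Sum>j<n. A i j * x j) + A i a * c" for i
    unfolding x'_def using sum_mult_add_unit[OF a(1)] .
  have "supp x' = insert a S"
    using c a(2) x(1) unfolding supp_def x'_def bad_def by auto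
  moreover have "(\<Sum>j<n. A i j * x' j) \<noteq> 0" if "i < m" "\<exists>s\<in>insert a S. A i s \<noteq> 0" for i
  proof (cases "A i a = 0")
    case True
    then show ?thesis
      using x(2) that row[of i] by auto
  next
    case False
    show ?thesis
    proof
      assume "(\<Sum>j<n. A i j * x' j) = 0"
      then have "c = - (\<Sum>j<n. A i j * x j) / A i a"
        using row[of i] False by (simp add: field_simps)
      then show False
        using c that(1) unfolding bad_def by auto
    qed
  qed
  ultimately show ?case
    by blast
qed

lemma sgn_add_less_abs:
  fixes a b :: real
  shows "\<bar>b\<bar> < \<bar>a\<bar> \<Longrightarrow> sgn (a + b) = sgn a"
  by (auto simp: sgn_if abs_if split: if_splits)

lemma is_vec_if_supp_subset: "supp x \<subseteq> {..<n} \<Longrightarrow> is_vec n x"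
  unfolding is_vec_def supp_def by force

lemma psi_add_unit_vec:
  assumes "j\<^sub>0 < n" and dominated: "\<forall>i<m. A i j\<^sub>0 \<noteq> 0 \<longrightarrow> \<bar>A i j\<^sub>0\<bar> < \<bar>\<Sum>j<n. A i j * z j\<bar>"
  shows "psi m n A (\<lambda>j. z j + (if j = j\<^sub>0 then 1 else 0)) = psi m n A z"
proof
  fix i
  have row: "(\<Sum>j<n. A i j * (z j + (if j = j\<^sub>0 then 1 else 0))) = (\<Sum>j<n. A i j * z j) + A i j\<^sub>0"
    using sum_mult_add_unit[OF assms(1)] by simp
  show "psi m n A (\<lambda>j. z j + (if j = j\<^sub>0 then 1 else 0)) i = psi m n A z i"
    unfolding psi_def row using dominated sgn_add_less_abs by fastforce
qed

lemma support_recovering_cover_free: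
  assumes SR: "support_recovering m n k A" and "1 \<le> k"
  shows "cover_free (k - 1) {..<n} (\<lambda>j. {i. i < m \<and> A i j \<noteq> 0})"
  unfolding cover_free_def
proof (intro ballI allI impI notI)
  fix j\<^sub>0 S
  assume j\<^sub>0: "j\<^sub>0 \<in> {..<n}" and S: "S \<subseteq> {..<n} - {j\<^sub>0}" "finite S" "card S \<le> k - 1"
    and covered: "{i. i < m \<and> A i j\<^sub>0 \<noteq> 0} \<subseteq> \<Union>((\<lambda>j. {i. i < m \<and> A i j \<noteq> 0}) ` S)"
  obtain x where x: "supp x = S" "\<forall>i<m. (\<exists>s\<in>S. A i s \<noteq> 0) \<longrightarrow> (\<Sum>j<n. A i j * x j) \<noteq> 0"
    using exists_vec_supp_nonzero_rows[OF S(2), of n m A] S(1) by blast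
  define \<sigma> where "\<sigma> i = (\<Sum>j<n. A i j * x j)" for i
  define L where "L = 1 + (\<Sum>i<m. \<bar>A i j\<^sub>0\<bar> / \<bar>\<sigma> i\<bar>)"
  have L: "\<bar>A i j\<^sub>0\<bar> / \<bar>\<sigma> i\<bar> < L" if "i < m" for i
    using member_le_sum[of i "{..<m}" "\<lambda>i. \<bar>A i j\<^sub>0\<bar> / \<bar>\<sigma> i\<bar>"] that unfolding L_def by simp
  have "0 < L"
    unfolding L_def by (smt (verit) sum_nonneg divide_nonneg_nonneg abs_ge_zero)
  define z where "z j = L * x j" for j
  define y where "y j = z j + (if j = j\<^sub>0 then 1 else 0)" for j
  have "\<bar>A i j\<^sub>0\<bar> < \<bar>\<Sum>j<n. A i j * z j\<bar>" if "i < m" "A i j\<^sub>0 \<noteq> 0" for i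
  proof -
    have "\<sigma> i \<noteq> 0"
      using covered x(2) that unfolding \<sigma>_def by blast
    then have "\<bar>A i j\<^sub>0\<bar> < L * \<bar>\<sigma> i\<bar>"
      using L[OF that(1)] by (simp add: divide_less_eq)
    also have "\<dots> = \<bar>\<Sum>j<n. A i j * z j\<bar>"
      using \<open>0 < L\<close> unfolding z_def \<sigma>_def by (simp add: abs_mult mult.left_commute flip: sum_distrib_left)
    finally show ?thesis .
  qed
  then have "psi m n A y = psi m n A z"
    unfolding y_def using psi_add_unit_vec j\<^sub>0 by blast
  moreover have supp_z: "supp z = S" and supp_y: "supp y = insert j\<^sub>0 S"
    using x(1) S(1) \<open>0 < L\<close> unfolding supp_def y_def z_def by auto
  moreover have "is_vec n z" "is_vec n y"
    using supp_z supp_y S(1) j\<^sub>0 is_vec_if_supp_subset[of z n] is_vec_if_supp_subset[of y n] by auto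
  moreover have "l0 z \<le> k" "l0 y \<le> k"
    using supp_z supp_y S(2,3) \<open>1 \<le> k\<close> unfolding l0_def by (auto simp: card_insert_if)
  moreover have "supp z \<noteq> supp y"
    using supp_z supp_y S(1) by auto
  ultimately show False
    using SR unfolding support_recovering_def by metis
qed

theorem theorem2:
  shows "\<exists>c>0. \<forall>m n k (A :: nat \<Rightarrow> nat \<Rightarrow> real).
           2 \<le> k \<longrightarrow> k\<^sup>2 \<le> n \<longrightarrow> support_recovering m n k A \<longrightarrow>
           real m \<ge> c * (real k)\<^sup>2 * ln (real n) / ln (real k)"
proof (intro exI[of _ "1 / 160"] conjI allI impI)
  fix m n k :: nat and A :: "nat \<Rightarrow> nat \<Rightarrow> real"
  assume k: "2 \<le> k" and n: "k\<^sup>2 \<le> n" and SR: "support_recovering m n k A"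
  have "cover_free (k - 1) {..<n} (\<lambda>j. {i. i < m \<and> A i j \<noteq> 0})"
    using support_recovering_cover_free[OF SR] k by simp
  then have "(real (k - 1) + 1)\<^sup>2 * ln (card {..<n}) \<le> 160 * card {..<m} * ln (real (k - 1) + 1)"
    by (rule cover_free_card_bound[rotated 3]) (use k n in auto)
  moreover have "real (k - 1) + 1 = k" "0 < ln (real k)"
    using k by auto
  ultimately show "real m \<ge> 1 / 160 * (real k)\<^sup>2 * ln (real n) / ln (real k)"
    by (simp add: pos_divide_le_eq)
qed simp

end
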